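(* Let $n,k\ge 1$, $\lambda_2\ge 0$, let $A_1,A_2\in\mathbb{R}^{k\times k}$ be symmetric, $B_1,B_2\in\mathbb{R}^{n\times k}$, and let $W_P,W_Q\in\mathbb{R}^{n\times n}$ be symmetric with nonnegative entries, $D_P,D_Q$ the diagonal matrices with $(D_P)_{ii}=\sum_j (W_P)_{ij}$, $(D_Q)_{ii}=\sum_j (W_Q)_{ij}$, and $L_P=D_P-W_P$, $L_Q=D_Q-W_Q$. For $V=[v_{ij}]\in\mathbb{R}^{n\times k}$ define $$F(V)=\mathrm{Tr}\big(-2V^TB_1^+ + 2V^TB_1^- + VA_1^+V^T - VA_1^-V^T - 2V^TB_2^+ + 2V^TB_2^- + VA_2^+V^T - VA_2^-V^T + \lambda_2 V^TD_PV - \lambda_2 V^TW_PV + \lambda_2 V^TD_QV - \lambda_2 V^TW_QV\big),$$ and consider the problem $\min_V F(V)$ subject to $v_{ij}\ge 0$. Define the update $V\mapsto \mathcal{T}(V)$ by $$\mathcal{T}(V)_{ij}= v_{ij}\sqrt{\frac{\big(B_1^{+}+B_2^{+}+V(A_1^{-}+A_2^{-})+\lambda_2(W_P+W_Q)V\big)_{ij}}{\big(B_1^{-}+B_2^{-}+V(A_1^{+}+A_2^{+})+\lambda_2(D_P+D_Q)V\big)_{ij}}}.$$ Let $V^{(0)}$ have strictly positive entries and $V^{(t+1)}=\mathcal{T}(V^{(t)})$, and assume that at every iterate all numerator and denominator entries above are strictly positive. Then $F(V^{(t+1)})\le F(V^{(t)})$ for all $t\ge 0$, i.e. $F$ is monotonically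 non-increasing along the iteration. Moreover, if $V^{(t)}\to V^*$ and the denominator entries at $V^*$ are strictly positive, then $V^*$ satisfies the KKT complementary slackness condition $$\big(-2B_1-2B_2+2V^*(A_1+A_2)+2\lambda_2(L_P+L_Q)V^*\big)_{ij}\, v^*_{ij}=0\quad\text{for all } i,j.$$
   Context: For a real matrix $M$, $M^+$ and $M^-$ denote the entrywise parts $M^+_{ij}=(|M_{ij}|+M_{ij})/2$ and $M^-_{ij}=(|M_{ij}|-M_{ij})/2$, so $M=M^+-M^-$ with $M^+,M^-\ge 0$ entrywise. In the paper's application, $A_1=\mathrm{vec}(\mathbf U^{(P)})^T\mathrm{vec}(\mathbf U^{(P)})$, $A_2=\mathrm{vec}(\mathbf U^{(Q)})^T\mathrm{vec}(\mathbf U^{(Q)})$, $B_1=\mathrm{vec}(\mathbf X^{(P)})^T\mathrm{vec}(\mathbf U^{(P)})$, $B_2=\mathrm{vec}(\mathbf X^{(Q)})^T\mathrm{vec}(\mathbf U^{(Q)})$, where for a collection of matrices $\mathbf M=\{M_1,\dots,M_m\}$, $\mathrm{vec}(\mathbf M)$ is the matrix whose $i$-th column is the vectorization of $M_i$; $F(V)$ then equals, up to an additive constant independent of $V$, the TS-NMF objective as a function of $V$. *)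

theory Defs
  imports "HOL-Analysis.Analysis"
begin

definition mpos :: "real^'c^'r \<Rightarrow> real^'c^'r" where
  "mpos M = (\<chi> i j. (\<bar>M $ i $ j\<bar> + M $ i $ j) / 2)"

definition mneg :: "real^'c^'r \<Rightarrow> real^'c^'r" where
  "mneg M = (\<chi> i j. (\<bar>M $ i $ j\<bar> - M $ i $ j) / 2)"

definition degmat :: "real^'n^'n \<Rightarrow> real^'n^'n" where
  "degmat W = (\<chi> i j. if i = j then (\<Sum>l\<in>UNIV. W $ i $ l) else 0)"

text \<open>The objective F(V); the trace of the sum (of square matrices of
  sizes k and n) is written as the sum of traces.\<close>
definition tsF ::
  "real^'k^'k \<Rightarrow> real^'k^'k \<Rightarrow> real^'k^'n \<Rightarrow> real^'k^'n \<Rightarrow>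
   real^'n^'n \<Rightarrow> real^'n^'n \<Rightarrow> real \<Rightarrow> real^'k^'n \<Rightarrow> real" where
  "tsF A1 A2 B1 B2 WP WQ lam V =
     trace ((-2) *\<^sub>R (transpose V ** mpos B1)) + trace (2 *\<^sub>R (transpose V ** mneg B1))
   + trace (V ** mpos A1 ** transpose V) - trace (V ** mneg A1 ** transpose V)
   + trace ((-2) *\<^sub>R (transpose V ** mpos B2)) + trace (2 *\<^sub>R (transpose V ** mneg B2))
   + trace (V ** mpos A2 ** transpose V) - trace (V ** mneg A2 ** transpose V)
   + trace (lam *\<^sub>R (transpose V ** degmat WP ** V)) - trace (lam *\<^sub>R (transpose V ** WP ** V))
   + trace (lam *\<^sub>R (transpose V ** degmat WQ ** V)) - trace (lam *\<^sub>R (transpose V ** WQ ** V))"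

definition tsNum ::
  "real^'k^'k \<Rightarrow> real^'k^'k \<Rightarrow> real^'k^'n \<Rightarrow> real^'k^'n \<Rightarrow>
   real^'n^'n \<Rightarrow> real^'n^'n \<Rightarrow> real \<Rightarrow> real^'k^'n \<Rightarrow> real^'k^'n" where
  "tsNum A1 A2 B1 B2 WP WQ lam V =
     mpos B1 + mpos B2 + V ** (mneg A1 + mneg A2) + lam *\<^sub>R ((WP + WQ) ** V)"

definition tsDen ::
  "real^'k^'k \<Rightarrow> real^'k^'k \<Rightarrow> real^'k^'n \<Rightarrow> real^'k^'n \<Rightarrow>
   real^'n^'n \<Rightarrow> real^'n^'n \<Rightarrow> real \<Rightarrow> real^'k^'n \<Rightarrow> real^'k^'n" where
  "tsDen A1 A2 B1 B2 WP WQ lam V =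
     mneg B1 + mneg B2 + V ** (mpos A1 + mpos A2) + lam *\<^sub>R ((degmat WP + degmat WQ) ** V)"

definition tsUpd ::
  "real^'k^'k \<Rightarrow> real^'k^'k \<Rightarrow> real^'k^'n \<Rightarrow> real^'k^'n \<Rightarrow>
   real^'n^'n \<Rightarrow> real^'n^'n \<Rightarrow> real \<Rightarrow> real^'k^'n \<Rightarrow> real^'k^'n" where
  "tsUpd A1 A2 B1 B2 WP WQ lam V =
     (\<chi> i j. V $ i $ j * sqrt (tsNum A1 A2 B1 B2 WP WQ lam V $ i $ j
                                / tsDen A1 A2 B1 B2 WP WQ lam V $ i $ j))"

end

theory Submission
  imports Defs
begin

(* Each update is a majorize-minimize step. Write the next iterate as the entrywise product
   X o U of the current iterate X with a positive matrix U. The positive parts of F are bounded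
   above by a separable function of U, using u_p u_q <= (u_p^2 + u_q^2)/2 and the symmetry of the
   coefficient matrices; the negative parts are bounded below using ln t <= t - 1. This separable
   majorizer agrees with F(X) at U = 1, and at the update U = sqrt (num/den) its entrywise excess
   over F(X) is x (n - d - n ln (n/d)) <= 0, where n, d are the numerator and denominator entries.
   A limit of the iteration is a fixed point of the continuous update map, so wherever v_ij <> 0
   the numerator equals the denominator; their difference is half the KKT gradient. *)

lemma quadratic_form_scaled_le:
  fixes M :: "'a::finite \<Rightarrow> 'a \<Rightarrow> real" and x u :: "'a \<Rightarrow> real"
  assumes sym: "\<And>p q. M p q = M q p" and nonneg: "\<And>p q. M p q \<ge> 0" and x_pos: "\<And>p. x p > 0"
  shows "(\<Sum>p\<in>UNIV. \<Sum>q\<in>UNIV. (x p * u p) * M p q * (x q * u q))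
    \<le> (\<Sum>p\<in>UNIV. (\<Sum>q\<in>UNIV. M p q * x q) * x p * (u p)\<^sup>2)"
proof -
  have "(\<Sum>p\<in>UNIV. \<Sum>q\<in>UNIV. (x p * u p) * M p q * (x q * u q))
      \<le> (\<Sum>p\<in>UNIV. \<Sum>q\<in>UNIV. M p q * x p * x q * ((u p)\<^sup>2 + (u q)\<^sup>2) / 2)"
  proof (intro sum_mono)
    fix p q
    have "u p * u q \<le> ((u p)\<^sup>2 + (u q)\<^sup>2) / 2"
      using sum_squares_bound[of "u p" "u q"] by (simp add: power2_eq_square)
    moreover have "M p q * x p * x q \<ge> 0" using nonneg x_pos by (simp add: less_imp_le)
    ultimately show "(x p * u p) * M p q * (x q * u q)
        \<le> M p q * x p * x q * ((u p)\<^sup>2 + (u q)\<^sup>2) / 2"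
      using mult_left_mono by (fastforce simp: algebra_simps)
  qed
  also have "\<dots> = (\<Sum>p\<in>UNIV. \<Sum>q\<in>UNIV. M p q * x p * x q * (u p)\<^sup>2)"
  proof -
    have "(\<Sum>p\<in>UNIV. \<Sum>q\<in>UNIV. M p q * x p * x q * (u q)\<^sup>2)
        = (\<Sum>p\<in>UNIV. \<Sum>q\<in>UNIV. M p q * x p * x q * (u p)\<^sup>2)"
      by (subst sum.swap) (simp add: sym mult.commute mult.left_commute)
    then show ?thesis
      by (simp add: add_divide_distrib sum.distrib distrib_left sum_divide_distrib[symmetric])
  qed
  also have "\<dots> = (\<Sum>p\<in>UNIV. (\<Sum>q\<in>UNIV. M p q * x q) * x p * (u p)\<^sup>2)"
    by (simp add: sum_distrib_left sum_distrib_right mult_ac)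
  finally show ?thesis .
qed

lemma quadratic_form_scaled_ge_ln:
  fixes M :: "'a::finite \<Rightarrow> 'a \<Rightarrow> real" and x u :: "'a \<Rightarrow> real"
  assumes sym: "\<And>p q. M p q = M q p" and nonneg: "\<And>p q. M p q \<ge> 0"
    and x_pos: "\<And>p. x p > 0" and u_pos: "\<And>p. u p > 0"
  shows "(\<Sum>p\<in>UNIV. (\<Sum>q\<in>UNIV. M p q * x q) * x p * (1 + 2 * ln (u p)))
    \<le> (\<Sum>p\<in>UNIV. \<Sum>q\<in>UNIV. (x p * u p) * M p q * (x q * u q))"
proof -
  have "(\<Sum>p\<in>UNIV. (\<Sum>q\<in>UNIV. M p q * x q) * x p * (1 + 2 * ln (u p)))
      = (\<Sum>p\<in>UNIV. \<Sum>q\<in>UNIV. M p q * x p * x q * (1/2 + ln (u p)))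
      + (\<Sum>p\<in>UNIV. \<Sum>q\<in>UNIV. M p q * x p * x q * (1/2 + ln (u p)))"
    by (simp add: sum_distrib_left sum_distrib_right algebra_simps)
  also have "\<dots> = (\<Sum>p\<in>UNIV. \<Sum>q\<in>UNIV. M p q * x p * x q * (1/2 + ln (u p)))
      + (\<Sum>p\<in>UNIV. \<Sum>q\<in>UNIV. M p q * x p * x q * (1/2 + ln (u q)))"
    by (subst (2) sum.swap) (simp add: sym mult.commute mult.left_commute)
  also have "\<dots> = (\<Sum>p\<in>UNIV. \<Sum>q\<in>UNIV. M p q * x p * x q * (1 + ln (u p * u q)))"
    unfolding sum.distrib[symmetric] using u_pos
    by (intro sum.cong refl) (simp add: ln_mult algebra_simps less_imp_neq[symmetric])
  also have "\<dots> \<le> (\<Sum>p\<in>UNIV. \<Sum>q\<in>UNIV. (x p * u p) * M p q * (x q * u q))"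
  proof (intro sum_mono)
    fix p q
    have "1 + ln (u p * u q) \<le> u p * u q"
      using ln_le_minus_one[of "u p * u q"] u_pos[of p] u_pos[of q] by simp
    moreover have "M p q * x p * x q \<ge> 0" using nonneg x_pos by (simp add: less_imp_le)
    ultimately show "M p q * x p * x q * (1 + ln (u p * u q))
        \<le> (x p * u p) * M p q * (x q * u q)"
      using mult_left_mono by (fastforce simp: algebra_simps)
  qed
  finally show ?thesis .
qed

definition hadamard :: "real^'c^'r \<Rightarrow> real^'c^'r \<Rightarrow> real^'c^'r" where
  "hadamard X U = (\<chi> i j. X $ i $ j * U $ i $ j)"

definition frob_inner :: "real^'c^'r \<Rightarrow> real^'c^'r \<Rightarrow> real" where
  "frob_inner B V = (\<Sum>i\<in>UNIV. \<Sum>j\<in>UNIV. B $ i $ j * V $ i $ j)"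

definition row_quad :: "real^'c^'c \<Rightarrow> real^'c^'r \<Rightarrow> real" where
  "row_quad A V = (\<Sum>i\<in>UNIV. \<Sum>j\<in>UNIV. \<Sum>l\<in>UNIV. V $ i $ j * A $ j $ l * V $ i $ l)"

lemma transpose_add: "transpose (A + B) = transpose A + transpose B"
  by (simp add: transpose_def vec_eq_iff)

lemma transpose_hadamard: "transpose (hadamard X U) = hadamard (transpose X) (transpose U)"
  by (simp add: hadamard_def transpose_def)

lemma symmetric_matrix_nth: "transpose A = A \<Longrightarrow> A $ i $ j = A $ j $ i"
  by (metis transpose_def vec_lambda_beta)

lemma matrix_mult_symmetric_nth:
  fixes A :: "real^'n^'n"
  assumes "transpose A = A"
  shows "(X ** A) $ i $ j = (\<Sum>l\<in>UNIV. A $ j $ l * X $ i $ l)"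
  unfolding matrix_matrix_mult_def
  by (simp add: symmetric_matrix_nth[OF assms, of _ j] mult.commute)

lemma transpose_mult_symmetric_nth:
  fixes D :: "real^'n^'n"
  assumes "transpose D = D"
  shows "(transpose X ** D) $ j $ i = (D ** X) $ i $ j"
  unfolding matrix_matrix_mult_def transpose_def
  by (simp add: symmetric_matrix_nth[OF assms, of _ i] mult.commute)

lemma trace_scaleR_transpose_mult: "trace (c *\<^sub>R (transpose V ** B)) = c * frob_inner B V"
  unfolding trace_def frob_inner_def matrix_matrix_mult_def transpose_def
  by (simp add: sum_distrib_left mult.commute) (rule sum.swap)

lemma trace_mult_transpose: "trace (V ** A ** transpose V) = row_quad A V"
  unfolding trace_def row_quad_def matrix_matrix_mult_def transpose_def
  by (simp add: sum_distrib_right) (rule sum.cong[OF refl], rule sum.swap)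

lemma trace_scaleR_transpose_mult_mult:
  "trace (c *\<^sub>R (transpose V ** D ** V)) = c * row_quad D (transpose V)"
  unfolding trace_def row_quad_def matrix_matrix_mult_def transpose_def
  by (simp add: sum_distrib_left sum_distrib_right) (rule sum.cong[OF refl], rule sum.swap)

lemma frob_inner_add: "frob_inner (B + C) V = frob_inner B V + frob_inner C V"
  by (simp add: frob_inner_def algebra_simps sum.distrib)

lemma row_quad_add: "row_quad (A + B) V = row_quad A V + row_quad B V"
  by (simp add: row_quad_def algebra_simps sum.distrib)

lemma row_quad_eq_sum: "row_quad A V = (\<Sum>i\<in>UNIV. \<Sum>j\<in>UNIV. (V ** A) $ i $ j * V $ i $ j)"
  unfolding row_quad_def matrix_matrix_mult_def
  by (simp add: sum_distrib_right) (rule sum.cong[OF refl], rule sum.swap)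

lemma row_quad_transpose_eq_sum:
  "row_quad D (transpose V) = (\<Sum>i\<in>UNIV. \<Sum>j\<in>UNIV. (D ** V) $ i $ j * V $ i $ j)"
  unfolding row_quad_def matrix_matrix_mult_def transpose_def
  by (simp add: sum_distrib_left) (rule trans[OF sum.swap], simp add: sum_distrib_left mult_ac)

lemma frob_inner_hadamard_ge:
  assumes "\<forall>i j. B $ i $ j \<ge> 0" "\<forall>i j. X $ i $ j > 0" "\<forall>i j. U $ i $ j > 0"
  shows "(\<Sum>i\<in>UNIV. \<Sum>j\<in>UNIV. B $ i $ j * X $ i $ j * (1 + ln (U $ i $ j)))
    \<le> frob_inner B (hadamard X U)"
  unfolding frob_inner_def hadamard_def
proof (intro sum_mono)
  fix i j
  have "1 + ln (U $ i $ j) \<le> U $ i $ j" using ln_le_minus_one assms(3) by (simp add: algebra_simps)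
  moreover have "B $ i $ j * X $ i $ j \<ge> 0" using assms by (simp add: less_imp_le)
  ultimately show "B $ i $ j * X $ i $ j * (1 + ln (U $ i $ j))
      \<le> B $ i $ j * (\<chi> i j. X $ i $ j * U $ i $ j) $ i $ j"
    using mult_left_mono by (fastforce simp: mult.assoc)
qed

lemma frob_inner_hadamard_le:
  assumes "\<forall>i j. B $ i $ j \<ge> 0" "\<forall>i j. X $ i $ j > 0"
  shows "frob_inner B (hadamard X U)
    \<le> (\<Sum>i\<in>UNIV. \<Sum>j\<in>UNIV. B $ i $ j * X $ i $ j * (((U $ i $ j)\<^sup>2 + 1) / 2))"
  unfolding frob_inner_def hadamard_def
proof (intro sum_mono)
  fix i j
  have "U $ i $ j \<le> ((U $ i $ j)\<^sup>2 + 1) / 2"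
    using sum_squares_bound[of "U $ i $ j" 1] by (simp add: power2_eq_square)
  moreover have "B $ i $ j * X $ i $ j \<ge> 0" using assms by (simp add: less_imp_le)
  ultimately show "B $ i $ j * (\<chi> i j. X $ i $ j * U $ i $ j) $ i $ j
      \<le> B $ i $ j * X $ i $ j * (((U $ i $ j)\<^sup>2 + 1) / 2)"
    using mult_left_mono by (fastforce simp: mult.assoc)
qed

lemma row_quad_hadamard_le:
  assumes sym: "transpose A = A" and nonneg: "\<forall>i j. A $ i $ j \<ge> 0"
    and X_pos: "\<forall>i j. X $ i $ j > 0"
  shows "row_quad A (hadamard X U)
    \<le> (\<Sum>i\<in>UNIV. \<Sum>j\<in>UNIV. (X ** A) $ i $ j * X $ i $ j * (U $ i $ j)\<^sup>2)"
  unfolding row_quad_def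
proof (rule sum_mono)
  fix i
  have "(\<Sum>j\<in>UNIV. \<Sum>l\<in>UNIV. (X $ i $ j * U $ i $ j) * A $ j $ l * (X $ i $ l * U $ i $ l))
      \<le> (\<Sum>j\<in>UNIV. (\<Sum>l\<in>UNIV. A $ j $ l * X $ i $ l) * X $ i $ j * (U $ i $ j)\<^sup>2)"
    using assms by (intro quadratic_form_scaled_le) (auto simp: symmetric_matrix_nth[OF sym])
  then show "(\<Sum>j\<in>UNIV. \<Sum>l\<in>UNIV. hadamard X U $ i $ j * A $ j $ l * hadamard X U $ i $ l)
      \<le> (\<Sum>j\<in>UNIV. (X ** A) $ i $ j * X $ i $ j * (U $ i $ j)\<^sup>2)"
    by (simp add: hadamard_def matrix_mult_symmetric_nth[OF sym] mult_ac)
qed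

lemma row_quad_hadamard_ge:
  assumes sym: "transpose A = A" and nonneg: "\<forall>i j. A $ i $ j \<ge> 0"
    and X_pos: "\<forall>i j. X $ i $ j > 0" and U_pos: "\<forall>i j. U $ i $ j > 0"
  shows "(\<Sum>i\<in>UNIV. \<Sum>j\<in>UNIV. (X ** A) $ i $ j * X $ i $ j * (1 + 2 * ln (U $ i $ j)))
    \<le> row_quad A (hadamard X U)"
  unfolding row_quad_def
proof (rule sum_mono)
  fix i
  have "(\<Sum>j\<in>UNIV. (\<Sum>l\<in>UNIV. A $ j $ l * X $ i $ l) * X $ i $ j * (1 + 2 * ln (U $ i $ j)))
      \<le> (\<Sum>j\<in>UNIV. \<Sum>l\<in>UNIV. (X $ i $ j * U $ i $ j) * A $ j $ l * (X $ i $ l * U $ i $ l))"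
    using assms by (intro quadratic_form_scaled_ge_ln) (auto simp: symmetric_matrix_nth[OF sym])
  then show "(\<Sum>j\<in>UNIV. (X ** A) $ i $ j * X $ i $ j * (1 + 2 * ln (U $ i $ j)))
      \<le> (\<Sum>j\<in>UNIV. \<Sum>l\<in>UNIV. hadamard X U $ i $ j * A $ j $ l * hadamard X U $ i $ l)"
    by (simp add: hadamard_def matrix_mult_symmetric_nth[OF sym] mult_ac)
qed

lemma row_quad_transpose_hadamard_le:
  assumes sym: "transpose D = D" and nonneg: "\<forall>i j. D $ i $ j \<ge> 0"
    and X_pos: "\<forall>i j. X $ i $ j > 0"
  shows "row_quad D (transpose (hadamard X U))
    \<le> (\<Sum>i\<in>UNIV. \<Sum>j\<in>UNIV. (D ** X) $ i $ j * X $ i $ j * (U $ i $ j)\<^sup>2)"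
proof -
  have "row_quad D (hadamard (transpose X) (transpose U))
      \<le> (\<Sum>j\<in>UNIV. \<Sum>i\<in>UNIV.
            (transpose X ** D) $ j $ i * transpose X $ j $ i * (transpose U $ j $ i)\<^sup>2)"
    using X_pos by (intro row_quad_hadamard_le[OF sym nonneg]) (simp add: transpose_def)
  then have "row_quad D (transpose (hadamard X U))
      \<le> (\<Sum>j\<in>UNIV. \<Sum>i\<in>UNIV. (D ** X) $ i $ j * X $ i $ j * (U $ i $ j)\<^sup>2)"
    by (simp only: transpose_hadamard transpose_mult_symmetric_nth[OF sym]) (simp add: transpose_def)
  then show ?thesis by (subst sum.swap)
qed

lemma row_quad_transpose_hadamard_ge:
  assumes sym: "transpose D = D" and nonneg: "\<forall>i j. D $ i $ j \<ge> 0"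
    and X_pos: "\<forall>i j. X $ i $ j > 0" and U_pos: "\<forall>i j. U $ i $ j > 0"
  shows "(\<Sum>i\<in>UNIV. \<Sum>j\<in>UNIV. (D ** X) $ i $ j * X $ i $ j * (1 + 2 * ln (U $ i $ j)))
    \<le> row_quad D (transpose (hadamard X U))"
proof -
  have "(\<Sum>j\<in>UNIV. \<Sum>i\<in>UNIV.
            (transpose X ** D) $ j $ i * transpose X $ j $ i * (1 + 2 * ln (transpose U $ j $ i)))
      \<le> row_quad D (hadamard (transpose X) (transpose U))"
    using X_pos U_pos by (intro row_quad_hadamard_ge[OF sym nonneg]) (simp_all add: transpose_def)
  then have "(\<Sum>j\<in>UNIV. \<Sum>i\<in>UNIV. (D ** X) $ i $ j * X $ i $ j * (1 + 2 * ln (U $ i $ j)))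
      \<le> row_quad D (transpose (hadamard X U))"
    by (simp only: transpose_hadamard transpose_mult_symmetric_nth[OF sym]) (simp add: transpose_def)
  then show ?thesis by (subst sum.swap)
qed

definition two_sided_quad :: "real \<Rightarrow> real^'k^'k \<Rightarrow> real^'n^'n \<Rightarrow> real^'k^'n \<Rightarrow> real" where
  "two_sided_quad c A D V = row_quad A V + c * row_quad D (transpose V)"

text \<open>For symmetric A and D this is half the gradient of two_sided_quad c A D.\<close>

definition two_sided_grad :: "real \<Rightarrow> real^'k^'k \<Rightarrow> real^'n^'n \<Rightarrow> real^'k^'n \<Rightarrow> real^'k^'n" where
  "two_sided_grad c A D V = V ** A + c *\<^sub>R (D ** V)"

lemma two_sided_quad_eq_sum:
  "two_sided_quad c A D V = (\<Sum>i\<in>UNIV. \<Sum>j\<in>UNIV. two_sided_grad c A D V $ i $ j * V $ i $ j)"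
  unfolding two_sided_quad_def two_sided_grad_def row_quad_transpose_eq_sum
  unfolding row_quad_eq_sum
  by (simp add: algebra_simps sum.distrib sum_distrib_left)

lemma two_sided_quad_hadamard_le:
  assumes "c \<ge> 0" "transpose A = A" "\<forall>i j. A $ i $ j \<ge> 0"
    "transpose D = D" "\<forall>i j. D $ i $ j \<ge> 0" "\<forall>i j. X $ i $ j > 0"
  shows "two_sided_quad c A D (hadamard X U)
    \<le> (\<Sum>i\<in>UNIV. \<Sum>j\<in>UNIV. two_sided_grad c A D X $ i $ j * X $ i $ j * (U $ i $ j)\<^sup>2)"
  using row_quad_hadamard_le[of A X U]
    mult_left_mono[OF row_quad_transpose_hadamard_le[of D X U] \<open>c \<ge> 0\<close>] assms
  by (simp add: two_sided_quad_def two_sided_grad_def algebra_simps sum.distrib sum_distrib_left)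

lemma two_sided_quad_hadamard_ge:
  assumes "c \<ge> 0" "transpose A = A" "\<forall>i j. A $ i $ j \<ge> 0"
    "transpose D = D" "\<forall>i j. D $ i $ j \<ge> 0" "\<forall>i j. X $ i $ j > 0" "\<forall>i j. U $ i $ j > 0"
  shows "(\<Sum>i\<in>UNIV. \<Sum>j\<in>UNIV.
            two_sided_grad c A D X $ i $ j * X $ i $ j * (1 + 2 * ln (U $ i $ j)))
    \<le> two_sided_quad c A D (hadamard X U)"
  using row_quad_hadamard_ge[of A X U]
    mult_left_mono[OF row_quad_transpose_hadamard_ge[of D X U] \<open>c \<ge> 0\<close>] assms
  by (simp add: two_sided_quad_def two_sided_grad_def algebra_simps sum.distrib sum_distrib_left)

lemma two_sided_grad_nth_tendsto:
  "V \<longlonglongrightarrow> Vs \<Longrightarrow>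
    (\<lambda>t. two_sided_grad c A D (V t) $ i $ j) \<longlonglongrightarrow> two_sided_grad c A D Vs $ i $ j"
  unfolding two_sided_grad_def matrix_matrix_mult_def
  by (simp, intro tendsto_intros tendsto_vec_nth)

lemma mult_update_entry_le:
  fixes bp bn p m x :: real
  assumes num: "bp + m > 0" and den: "bn + p > 0" and x: "x > 0"
  defines "u \<equiv> sqrt ((bp + m) / (bn + p))"
  shows "- 2 * (bp * x * (1 + ln u)) + 2 * (bn * x * ((u\<^sup>2 + 1) / 2))
      + p * x * u\<^sup>2 - m * x * (1 + 2 * ln u)
    \<le> - 2 * (bp * x) + 2 * (bn * x) + p * x - m * x"
proof -
  define n d where "n = bp + m" and "d = bn + p"
  have "n > 0" "d > 0" using num den by (simp_all add: n_def d_def)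
  have u2: "u\<^sup>2 = n / d" and ln_u: "2 * ln u = ln (n / d)"
    using \<open>n > 0\<close> \<open>d > 0\<close> by (simp_all add: u_def n_def d_def ln_sqrt)
  have "ln (d / n) \<le> d / n - 1" using \<open>n > 0\<close> \<open>d > 0\<close> by (intro ln_le_minus_one) simp
  then have key: "n - d - n * ln (n / d) \<le> 0"
    using \<open>n > 0\<close> \<open>d > 0\<close> mult_left_mono[of "ln (d / n)" "d / n - 1" n]
    by (simp add: ln_div field_simps)
  have "- 2 * (bp * x * (1 + ln u)) + 2 * (bn * x * ((u\<^sup>2 + 1) / 2))
      + p * x * u\<^sup>2 - m * x * (1 + 2 * ln u) - (- 2 * (bp * x) + 2 * (bn * x) + p * x - m * x)
    = x * (d * u\<^sup>2 - d - n * (2 * ln u))"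
    by (simp add: n_def d_def field_simps)
  also have "\<dots> = x * (n - d - n * ln (n / d))"
    using \<open>d > 0\<close> by (simp add: u2 ln_u)
  also have "\<dots> \<le> 0"
    using x key by (simp add: mult_nonneg_nonpos)
  finally show ?thesis by simp
qed

definition split_objective ::
  "real \<Rightarrow> real^'k^'n \<Rightarrow> real^'k^'n \<Rightarrow> real^'k^'k \<Rightarrow> real^'k^'k \<Rightarrow> real^'n^'n \<Rightarrow> real^'n^'n
   \<Rightarrow> real^'k^'n \<Rightarrow> real" where
  "split_objective c Bp Bn Ap An Dp Dn V =
     - 2 * frob_inner Bp V + 2 * frob_inner Bn V
     + two_sided_quad c Ap Dp V - two_sided_quad c An Dn V"

definition mult_update ::
  "real \<Rightarrow> real^'k^'n \<Rightarrow> real^'k^'n \<Rightarrow> real^'k^'k \<Rightarrow> real^'k^'k \<Rightarrow> real^'n^'n \<Rightarrow> real^'n^'n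
   \<Rightarrow> real^'k^'n \<Rightarrow> real^'k^'n" where
  "mult_update c Bp Bn Ap An Dp Dn V =
     hadamard V (\<chi> i j. sqrt ((Bp + two_sided_grad c An Dn V) $ i $ j
                                / (Bn + two_sided_grad c Ap Dp V) $ i $ j))"

lemma split_objective_mult_update_le:
  assumes c: "c \<ge> 0" and Bp: "\<forall>i j. Bp $ i $ j \<ge> 0" and Bn: "\<forall>i j. Bn $ i $ j \<ge> 0"
    and Ap: "transpose Ap = Ap" "\<forall>i j. Ap $ i $ j \<ge> 0"
    and An: "transpose An = An" "\<forall>i j. An $ i $ j \<ge> 0"
    and Dp: "transpose Dp = Dp" "\<forall>i j. Dp $ i $ j \<ge> 0"
    and Dn: "transpose Dn = Dn" "\<forall>i j. Dn $ i $ j \<ge> 0"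
    and X: "\<forall>i j. X $ i $ j > 0"
    and num: "\<forall>i j. (Bp + two_sided_grad c An Dn X) $ i $ j > 0"
    and den: "\<forall>i j. (Bn + two_sided_grad c Ap Dp X) $ i $ j > 0"
  shows "split_objective c Bp Bn Ap An Dp Dn (mult_update c Bp Bn Ap An Dp Dn X)
    \<le> split_objective c Bp Bn Ap An Dp Dn X"
proof -
  define P M where "P = two_sided_grad c Ap Dp X" and "M = two_sided_grad c An Dn X"
  define U where "U = (\<chi> i j. sqrt ((Bp + M) $ i $ j / (Bn + P) $ i $ j))"
  have U_pos: "\<forall>i j. U $ i $ j > 0" using num den by (simp add: U_def P_def M_def)
  have "split_objective c Bp Bn Ap An Dp Dn (hadamard X U)
      \<le> - 2 * (\<Sum>i\<in>UNIV. \<Sum>j\<in>UNIV. Bp $ i $ j * X $ i $ j * (1 + ln (U $ i $ j)))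
        + 2 * (\<Sum>i\<in>UNIV. \<Sum>j\<in>UNIV. Bn $ i $ j * X $ i $ j * (((U $ i $ j)\<^sup>2 + 1) / 2))
        + (\<Sum>i\<in>UNIV. \<Sum>j\<in>UNIV. P $ i $ j * X $ i $ j * (U $ i $ j)\<^sup>2)
        - (\<Sum>i\<in>UNIV. \<Sum>j\<in>UNIV. M $ i $ j * X $ i $ j * (1 + 2 * ln (U $ i $ j)))"
    using frob_inner_hadamard_ge[OF Bp X U_pos] frob_inner_hadamard_le[OF Bn X, of U]
      two_sided_quad_hadamard_le[OF c Ap Dp X, of U] two_sided_quad_hadamard_ge[OF c An Dn X U_pos]
    unfolding split_objective_def P_def M_def by linarith
  also have "\<dots> = (\<Sum>i\<in>UNIV. \<Sum>j\<in>UNIV. - 2 * (Bp $ i $ j * X $ i $ j * (1 + ln (U $ i $ j)))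
          + 2 * (Bn $ i $ j * X $ i $ j * (((U $ i $ j)\<^sup>2 + 1) / 2))
          + P $ i $ j * X $ i $ j * (U $ i $ j)\<^sup>2 - M $ i $ j * X $ i $ j * (1 + 2 * ln (U $ i $ j)))"
    by (simp add: sum.distrib sum_subtractf sum_distrib_left sum_negf)
  also have "\<dots> \<le> (\<Sum>i\<in>UNIV. \<Sum>j\<in>UNIV. - 2 * (Bp $ i $ j * X $ i $ j)
          + 2 * (Bn $ i $ j * X $ i $ j) + P $ i $ j * X $ i $ j - M $ i $ j * X $ i $ j)"
    using num den X unfolding U_def P_def[symmetric] M_def[symmetric]
    by (intro sum_mono, unfold vec_lambda_beta vector_add_component, intro mult_update_entry_le) auto
  also have "\<dots> = split_objective c Bp Bn Ap An Dp Dn X"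
    unfolding split_objective_def two_sided_quad_eq_sum frob_inner_def P_def M_def
    by (simp add: sum.distrib sum_subtractf sum_distrib_left sum_negf)
  finally show ?thesis by (simp add: mult_update_def U_def P_def M_def)
qed

lemma mult_update_limit_complementary:
  assumes lim: "V \<longlonglongrightarrow> Vs"
    and iter: "\<forall>t. V (Suc t) = mult_update c Bp Bn Ap An Dp Dn (V t)"
    and den: "(Bn + two_sided_grad c Ap Dp Vs) $ i $ j > 0"
  shows "((Bn + two_sided_grad c Ap Dp Vs) - (Bp + two_sided_grad c An Dn Vs)) $ i $ j
           * Vs $ i $ j = 0"
proof -
  define N D where "N V = (Bp + two_sided_grad c An Dn V) $ i $ j"
    and "D V = (Bn + two_sided_grad c Ap Dp V) $ i $ j" for V
  have V_nth: "(\<lambda>t. V t $ i $ j) \<longlonglongrightarrow> Vs $ i $ j"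
    using lim by (intro tendsto_vec_nth)
  have "(\<lambda>t. V (Suc t) $ i $ j) \<longlonglongrightarrow> Vs $ i $ j * sqrt (N Vs / D Vs)"
    unfolding iter[rule_format] mult_update_def hadamard_def N_def D_def
    using den by (simp, intro tendsto_intros V_nth two_sided_grad_nth_tendsto[OF lim]) simp
  moreover have "(\<lambda>t. V (Suc t) $ i $ j) \<longlonglongrightarrow> Vs $ i $ j"
    using V_nth by (rule LIMSEQ_Suc)
  ultimately have fixed: "Vs $ i $ j * sqrt (N Vs / D Vs) = Vs $ i $ j"
    by (rule LIMSEQ_unique)
  have "D Vs = N Vs" if "Vs $ i $ j \<noteq> 0"
    using fixed that den by (simp add: D_def[symmetric])
  then show ?thesis by (auto simp: N_def D_def)
qed

lemma mpos_nonneg: "mpos M $ i $ j \<ge> 0"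
  by (simp add: mpos_def)

lemma mneg_nonneg: "mneg M $ i $ j \<ge> 0"
  by (simp add: mneg_def)

lemma mpos_diff_mneg: "mpos M - mneg M = M"
  by (simp add: mpos_def mneg_def vec_eq_iff field_simps)

lemma transpose_mpos: "transpose (mpos M) = mpos (transpose M)"
  by (simp add: mpos_def transpose_def)

lemma transpose_mneg: "transpose (mneg M) = mneg (transpose M)"
  by (simp add: mneg_def transpose_def)

lemma degmat_nonneg: "\<forall>i j. W $ i $ j \<ge> 0 \<Longrightarrow> degmat W $ i $ j \<ge> 0"
  by (simp add: degmat_def sum_nonneg)

lemma transpose_degmat: "transpose (degmat W) = degmat W"
  by (simp add: degmat_def transpose_def vec_eq_iff)

lemma tsF_eq_split_objective:
  "tsF A1 A2 B1 B2 WP WQ lam V =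
     split_objective lam (mpos B1 + mpos B2) (mneg B1 + mneg B2)
       (mpos A1 + mpos A2) (mneg A1 + mneg A2) (degmat WP + degmat WQ) (WP + WQ) V"
  unfolding tsF_def split_objective_def two_sided_quad_def trace_scaleR_transpose_mult
    trace_mult_transpose trace_scaleR_transpose_mult_mult frob_inner_add row_quad_add
  by (simp add: algebra_simps)

lemma tsNum_eq:
  "tsNum A1 A2 B1 B2 WP WQ lam V =
     mpos B1 + mpos B2 + two_sided_grad lam (mneg A1 + mneg A2) (WP + WQ) V"
  by (simp add: tsNum_def two_sided_grad_def add.assoc)

lemma tsDen_eq:
  "tsDen A1 A2 B1 B2 WP WQ lam V =
     mneg B1 + mneg B2 + two_sided_grad lam (mpos A1 + mpos A2) (degmat WP + degmat WQ) V"
  by (simp add: tsDen_def two_sided_grad_def add.assoc)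

lemma tsUpd_eq_mult_update:
  "tsUpd A1 A2 B1 B2 WP WQ lam V =
     mult_update lam (mpos B1 + mpos B2) (mneg B1 + mneg B2)
       (mpos A1 + mpos A2) (mneg A1 + mneg A2) (degmat WP + degmat WQ) (WP + WQ) V"
  by (simp add: tsUpd_def mult_update_def hadamard_def tsNum_eq tsDen_eq)

lemma matrix_diff_ldistrib: "(A :: real^'m^'n) ** (B - C) = A ** B - A ** C"
  by (simp add: matrix_matrix_mult_def vec_eq_iff algebra_simps sum_subtractf)

lemma matrix_add_rdistrib: "((A :: real^'m^'n) + B) ** C = A ** C + B ** C"
  by (simp add: matrix_matrix_mult_def vec_eq_iff algebra_simps sum.distrib)

lemma matrix_diff_rdistrib: "((A :: real^'m^'n) - B) ** C = A ** C - B ** C"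
  by (simp add: matrix_matrix_mult_def vec_eq_iff algebra_simps sum_subtractf)

lemma tsF_gradient_eq:
  "(-2) *\<^sub>R B1 - 2 *\<^sub>R B2 + 2 *\<^sub>R (V ** (A1 + A2))
     + (2 * lam) *\<^sub>R ((degmat WP - WP + (degmat WQ - WQ)) ** V)
   = 2 *\<^sub>R (tsDen A1 A2 B1 B2 WP WQ lam V - tsNum A1 A2 B1 B2 WP WQ lam V)"
proof -
  have "tsDen A1 A2 B1 B2 WP WQ lam V - tsNum A1 A2 B1 B2 WP WQ lam V
      = - (mpos B1 - mneg B1) - (mpos B2 - mneg B2)
        + V ** ((mpos A1 - mneg A1) + (mpos A2 - mneg A2)) + lam *\<^sub>R ((degmat WP - WP + (degmat WQ - WQ)) ** V)"
    by (simp add: tsDen_def tsNum_def matrix_add_ldistrib matrix_diff_ldistrib matrix_add_rdistrib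
        matrix_diff_rdistrib scaleR_diff_right algebra_simps)
  also have "\<dots>
      = - B1 - B2 + V ** (A1 + A2) + lam *\<^sub>R ((degmat WP - WP + (degmat WQ - WQ)) ** V)"
    by (simp only: mpos_diff_mneg)
  finally show ?thesis
    by (simp add: scaleR_add_right scaleR_diff_right)
qed

theorem theorem1:
  fixes A1 A2 :: "real^'k^'k" and B1 B2 :: "real^'k^'n"
    and WP WQ :: "real^'n^'n" and lam :: real
    and V :: "nat \<Rightarrow> real^'k^'n"
  assumes lam: "lam \<ge> 0"
    and symA1: "transpose A1 = A1" and symA2: "transpose A2 = A2"
    and symWP: "transpose WP = WP" and symWQ: "transpose WQ = WQ"
    and nnWP: "\<forall>i j. WP $ i $ j \<ge> 0" and nnWQ: "\<forall>i j. WQ $ i $ j \<ge> 0"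
    and V0: "\<forall>i j. V 0 $ i $ j > 0"
    and iter: "\<forall>t. V (Suc t) = tsUpd A1 A2 B1 B2 WP WQ lam (V t)"
    and num_pos: "\<forall>t i j. tsNum A1 A2 B1 B2 WP WQ lam (V t) $ i $ j > 0"
    and den_pos: "\<forall>t i j. tsDen A1 A2 B1 B2 WP WQ lam (V t) $ i $ j > 0"
  shows "(\<forall>t. tsF A1 A2 B1 B2 WP WQ lam (V (Suc t)) \<le> tsF A1 A2 B1 B2 WP WQ lam (V t))
    \<and> (\<forall>Vs. V \<longlonglongrightarrow> Vs \<longrightarrow> (\<forall>i j. tsDen A1 A2 B1 B2 WP WQ lam Vs $ i $ j > 0) \<longrightarrow>
         (\<forall>i j. ((-2) *\<^sub>R B1 - 2 *\<^sub>R B2 + 2 *\<^sub>R (Vs ** (A1 + A2))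
                  + (2 * lam) *\<^sub>R ((degmat WP - WP + (degmat WQ - WQ)) ** Vs)) $ i $ j
                * Vs $ i $ j = 0))"
proof -
  let ?Bp = "mpos B1 + mpos B2" and ?Bn = "mneg B1 + mneg B2"
    and ?Ap = "mpos A1 + mpos A2" and ?An = "mneg A1 + mneg A2"
    and ?Dp = "degmat WP + degmat WQ" and ?Dn = "WP + WQ"
  have nonneg: "\<forall>i j. ?Bp $ i $ j \<ge> 0" "\<forall>i j. ?Bn $ i $ j \<ge> 0" "\<forall>i j. ?Ap $ i $ j \<ge> 0"
    "\<forall>i j. ?An $ i $ j \<ge> 0" "\<forall>i j. ?Dp $ i $ j \<ge> 0" "\<forall>i j. ?Dn $ i $ j \<ge> 0"
    using nnWP nnWQ by (simp_all add: mpos_nonneg mneg_nonneg degmat_nonneg add_nonneg_nonneg)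
  have sym: "transpose ?Ap = ?Ap" "transpose ?An = ?An" "transpose ?Dp = ?Dp" "transpose ?Dn = ?Dn"
    by (simp_all add: transpose_add transpose_mpos transpose_mneg transpose_degmat
        symA1 symA2 symWP symWQ)
  have upd: "V (Suc t) = mult_update lam ?Bp ?Bn ?Ap ?An ?Dp ?Dn (V t)" for t
    using iter by (simp add: tsUpd_eq_mult_update)
  have pos: "\<forall>i j. V t $ i $ j > 0" for t
  proof (induction t)
    case 0
    show ?case using V0 .
  next
    case (Suc t)
    then show ?case using num_pos den_pos iter by (simp add: tsUpd_def)
  qed
  have "tsF A1 A2 B1 B2 WP WQ lam (V (Suc t)) \<le> tsF A1 A2 B1 B2 WP WQ lam (V t)" for t
    unfolding tsF_eq_split_objective upd
    using num_pos den_pos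
    by (intro split_objective_mult_update_le lam nonneg sym pos) (simp_all add: tsNum_eq tsDen_eq)
  moreover have "((-2) *\<^sub>R B1 - 2 *\<^sub>R B2 + 2 *\<^sub>R (Vs ** (A1 + A2))
      + (2 * lam) *\<^sub>R ((degmat WP - WP + (degmat WQ - WQ)) ** Vs)) $ i $ j * Vs $ i $ j = 0"
    if "V \<longlonglongrightarrow> Vs" "\<forall>i j. tsDen A1 A2 B1 B2 WP WQ lam Vs $ i $ j > 0" for Vs i j
  proof -
    have "(tsDen A1 A2 B1 B2 WP WQ lam Vs - tsNum A1 A2 B1 B2 WP WQ lam Vs) $ i $ j
        * Vs $ i $ j = 0"
      unfolding tsNum_eq tsDen_eq
      by (rule mult_update_limit_complementary[OF that(1)])
        (use upd that(2) in \<open>simp_all add: tsDen_eq\<close>)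
    then show ?thesis unfolding tsF_gradient_eq by simp
  qed
  ultimately show ?thesis by blast
qed

end
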